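(* Let $0<R<1$ and let $f$ be a circular tractrix with parameter $R$ and constants $c_1^2-c_2^2=1$. Then $f'(t)=0$ if and only if $t\in\frac{\pi}{\lambda}\mathbb Z$. Moreover, for every $n\in\mathbb Z$ the length of the arc $f|_{[n\pi/\lambda,(n+1)\pi/\lambda]}$ between two consecutive singular points equals $$\operatorname{sign}(c_1)\,\ln\left|\frac{c_1+R}{c_1-R}\right|,$$ which is finite and positive.
   Context: Fix $0<R<1$, $\lambda=\frac{\sqrt{1-R^2}}{R}$, and real constants $c_1,c_2$ with $c_1^2-c_2^2=1$. The circular tractrix is $f(t)=\big(\xi_1\cos\tfrac tR+\xi_2\sin\tfrac tR,\ -\xi_2\cos\tfrac tR+\xi_1\sin\tfrac tR,\ \xi_3\big)$, $t\in\mathbb R$, with $\xi_1=\frac{(R-\frac1R)\cos\lambda t}{\frac{c_1}{R}+\cos\lambda t}$, $\xi_2=-\frac{\lambda\sin\lambda t}{\frac{c_1}{R}+\cos\lambda t}$, $\xi_3=\frac{\lambda c_2}{\frac{c_1}{R}+\cos\lambda t}$. *)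

theory Defs
  imports "HOL-Analysis.Analysis"
begin

definition tr_lambda :: "real \<Rightarrow> real" where
  "tr_lambda R = sqrt (1 - R\<^sup>2) / R"

definition circ_tractrix :: "real \<Rightarrow> real \<Rightarrow> real \<Rightarrow> real \<Rightarrow> real^3" where
  "circ_tractrix R c1 c2 t =
    (let l = tr_lambda R;
         den = c1 / R + cos (l * t);
         x1 = (R - 1 / R) * cos (l * t) / den;
         x2 = - (l * sin (l * t)) / den;
         x3 = l * c2 / den
     in vector [x1 * cos (t / R) + x2 * sin (t / R),
                - x2 * cos (t / R) + x1 * sin (t / R),
                x3])"

end

theory Submission
  imports Defs
begin

text \<open>In the frame rotating with angular velocity 1/R the tractrix is the curve
(\<xi>1, \<xi>2, \<xi>3). Differentiating, the relation c1^2 - c2^2 = 1 collapses the speed to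
\<lambda> |sin \<lambda>t| / |c1/R + cos \<lambda>t|, whose denominator never vanishes because |c1| \<ge> 1 > R.
So f' vanishes exactly where sin \<lambda>t does. Between consecutive zeros sin \<lambda>t has constant
sign, so the speed is, up to that sign, the derivative of -ln |c1/R + cos \<lambda>t|, and every
arc has length sgn c1 * ln |(c1 + R)/(c1 - R)|.\<close>

lemma tr_lambda_pos:
  assumes "0 < R" "R < 1"
  shows "tr_lambda R > 0"
  using assms by (simp add: tr_lambda_def abs_square_less_1)

lemma tr_lambda_squared:
  assumes "0 < R" "R < 1"
  shows "(tr_lambda R)\<^sup>2 = (1 - R\<^sup>2) / R\<^sup>2"
  using assms by (simp add: tr_lambda_def power_divide abs_square_less_1 less_imp_le)

lemma abs_div_gt_1_if_sq_diff_eq_1: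
  fixes R c1 c2 :: real
  assumes "0 < R" "R < 1" "c1\<^sup>2 - c2\<^sup>2 = 1"
  shows "1 < \<bar>c1 / R\<bar>"
proof -
  have "1 \<le> c1\<^sup>2" using assms(3) by (simp add: algebra_simps)
  then have "1 \<le> \<bar>c1\<bar>" using abs_square_less_1[of c1] by (simp add: not_less[symmetric])
  then have "R < \<bar>c1\<bar>" using assms(2) by linarith
  then show ?thesis using assms(1) by (simp add: abs_divide)
qed

lemma sgn_mult_add_cos_pos:
  fixes a x :: real
  assumes "1 < \<bar>a\<bar>"
  shows "sgn a * (a + cos x) > 0"
proof (cases "a > 0")
  case True
  then have "0 < a + cos x" using assms cos_ge_minus_one[of x] by linarith
  then show ?thesis using True by simp
next
  case False
  then have "a + cos x < 0" using assms cos_le_one[of x] by linarith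
  moreover have "a < 0" using False assms by simp
  ultimately show ?thesis by simp
qed

lemma vector_3_eq_axis_sum:
  "(vector [x, y, z] :: real^3) = x *\<^sub>R axis 1 1 + y *\<^sub>R axis 2 1 + z *\<^sub>R axis 3 1"
  by (simp add: vec_eq_iff forall_3 axis_def)

lemma has_vector_derivative_vector_3:
  assumes "(X has_real_derivative X') (at t)" "(Y has_real_derivative Y') (at t)"
    "(Z has_real_derivative Z') (at t)"
  shows "((\<lambda>t. vector [X t, Y t, Z t] :: real^3) has_vector_derivative vector [X', Y', Z']) (at t)"
  unfolding vector_3_eq_axis_sum
  using assms by (auto intro!: derivative_eq_intros simp: has_real_derivative_iff_has_vector_derivative)

lemma norm_vector_3: "norm (vector [x, y, z] :: real^3) = sqrt (x\<^sup>2 + y\<^sup>2 + z\<^sup>2)"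
  by (simp add: norm_vec_def L2_set_def sum_3)

lemma rotation_preserves_sum_squares:
  fixes u v c s :: real
  assumes "s\<^sup>2 + c\<^sup>2 = 1"
  shows "(u * c - v * s)\<^sup>2 + (u * s + v * c)\<^sup>2 = u\<^sup>2 + v\<^sup>2"
proof -
  have "(u * c - v * s)\<^sup>2 + (u * s + v * c)\<^sup>2 = (u\<^sup>2 + v\<^sup>2) * (s\<^sup>2 + c\<^sup>2)"
    by (simp add: power2_eq_square algebra_simps)
  then show ?thesis using assms by simp
qed

lemma rotating_curve_has_vector_derivative:
  assumes "(x1 has_real_derivative d1) (at t)" "(x2 has_real_derivative d2) (at t)"
    "(x3 has_real_derivative d3) (at t)" "R \<noteq> 0"
  shows "\<exists>V. ((\<lambda>t. vector [x1 t * cos (t / R) + x2 t * sin (t / R),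
                        - x2 t * cos (t / R) + x1 t * sin (t / R), x3 t] :: real^3)
               has_vector_derivative V) (at t)
          \<and> norm V = sqrt ((d1 + x2 t / R)\<^sup>2 + (x1 t / R - d2)\<^sup>2 + d3\<^sup>2)"
proof -
  define u where "u = d1 + x2 t / R"
  define v where "v = x1 t / R - d2"
  have "((\<lambda>t. x1 t * cos (t / R) + x2 t * sin (t / R)) has_real_derivative
      u * cos (t / R) - v * sin (t / R)) (at t)"
    unfolding u_def v_def by (rule derivative_eq_intros refl assms)+ (simp add: algebra_simps)
  moreover have "((\<lambda>t. - x2 t * cos (t / R) + x1 t * sin (t / R)) has_real_derivative
      u * sin (t / R) + v * cos (t / R)) (at t)"
    unfolding u_def v_def by (rule derivative_eq_intros refl assms)+ (simp add: algebra_simps)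
  ultimately have "((\<lambda>t. vector [x1 t * cos (t / R) + x2 t * sin (t / R),
                        - x2 t * cos (t / R) + x1 t * sin (t / R), x3 t] :: real^3)
      has_vector_derivative vector [u * cos (t / R) - v * sin (t / R), u * sin (t / R) + v * cos (t / R), d3]) (at t)"
    using assms(3) by (rule has_vector_derivative_vector_3)
  moreover have "norm (vector [u * cos (t / R) - v * sin (t / R), u * sin (t / R) + v * cos (t / R), d3] :: real^3)
      = sqrt (u\<^sup>2 + v\<^sup>2 + d3\<^sup>2)"
    unfolding norm_vector_3 rotation_preserves_sum_squares[OF sin_cos_squared_add] ..
  ultimately show ?thesis unfolding u_def v_def by blast
qed

lemma has_real_derivative_cos_div_add_cos:
  assumes "a + cos (L * t) \<noteq> 0"
  shows "((\<lambda>t. p * cos (L * t) / (a + cos (L * t))) has_real_derivative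
           - (p * L * a * sin (L * t)) / (a + cos (L * t))\<^sup>2) (at t)"
  by (rule derivative_eq_intros refl assms)+ (simp add: field_simps power2_eq_square)

lemma has_real_derivative_sin_div_add_cos:
  assumes "a + cos (L * t) \<noteq> 0"
  shows "((\<lambda>t. - (L * sin (L * t)) / (a + cos (L * t))) has_real_derivative
           - (L\<^sup>2 * (a * cos (L * t) + 1)) / (a + cos (L * t))\<^sup>2) (at t)"
proof -
  have sin_sq: "sin (L * t) * sin (L * t) = 1 - cos (L * t) * cos (L * t)"
    using sin_cos_squared_add[of "L * t"] by (simp add: power2_eq_square)
  show ?thesis
    by (rule derivative_eq_intros refl assms)+ (simp add: field_simps power2_eq_square sin_sq)
qed

lemma has_real_derivative_const_div_add_cos:
  assumes "a + cos (L * t) \<noteq> 0"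
  shows "((\<lambda>t. q / (a + cos (L * t))) has_real_derivative
           q * L * sin (L * t) / (a + cos (L * t))\<^sup>2) (at t)"
  by (rule derivative_eq_intros refl assms)+ (simp add: field_simps power2_eq_square)

lemma tractrix_speed_identity:
  fixes R c1 c2 L c w D :: real
  assumes "R > 0" "D = c1 / R + c" "D \<noteq> 0" "w\<^sup>2 + c\<^sup>2 = 1" "c2\<^sup>2 = c1\<^sup>2 - 1"
    "L\<^sup>2 = (1 - R\<^sup>2) / R\<^sup>2"
  shows "(- ((R - 1/R) * L * (c1/R) * w) / D\<^sup>2 + (- (L * w) / D) / R)\<^sup>2
       + ((R - 1/R) * c / D / R - (- (L\<^sup>2 * (c1/R * c + 1)) / D\<^sup>2))\<^sup>2
       + (L * c2 * L * w / D\<^sup>2)\<^sup>2 = (L * w / D)\<^sup>2"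
proof -
  have c1: "c1 = R * (D - c)" and w2: "w\<^sup>2 = 1 - c\<^sup>2"
    using assms(1,2,4) by (simp_all add: field_simps)
  have planar1: "- ((R - 1/R) * L * (c1/R) * w) / D\<^sup>2 + (- (L * w) / D) / R
      = - (L * w * (R * c1 + c)) / (R * D\<^sup>2)"
    using assms(1,3) unfolding c1 by (simp add: field_simps power2_eq_square)
  have planar2: "(R - 1/R) * c / D / R - (- (L\<^sup>2 * (c1/R * c + 1)) / D\<^sup>2) = L\<^sup>2 * w\<^sup>2 / D\<^sup>2"
    using assms(1,3) unfolding w2 assms(6) c1 by (simp add: field_simps power2_eq_square)
  \<comment> \<open>here c1^2 - c2^2 = 1 collapses the squared speed to a multiple of D^2\<close>
  have bracket: "(R * c1 + c)\<^sup>2 / R\<^sup>2 + L\<^sup>2 * w\<^sup>2 + L\<^sup>2 * c2\<^sup>2 = D\<^sup>2"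
    using assms(1) unfolding w2 assms(5,6) c1 by (simp add: field_simps power2_eq_square)
  have "(- (L * w * (R * c1 + c)) / (R * D\<^sup>2))\<^sup>2 + (L\<^sup>2 * w\<^sup>2 / D\<^sup>2)\<^sup>2 + (L * c2 * L * w / D\<^sup>2)\<^sup>2
      = (L * w / D\<^sup>2)\<^sup>2 * ((R * c1 + c)\<^sup>2 / R\<^sup>2 + L\<^sup>2 * w\<^sup>2 + L\<^sup>2 * c2\<^sup>2)"
    using assms(1,3) by (simp add: field_simps power2_eq_square)
  also have "\<dots> = (L * w / D)\<^sup>2"
    unfolding bracket using assms(3) by (simp add: field_simps power2_eq_square)
  finally show ?thesis unfolding planar1 planar2 .
qed

lemma circ_tractrix_has_vector_derivative:
  fixes R c1 c2 t :: real
  assumes R: "0 < R" "R < 1" and c: "c1\<^sup>2 - c2\<^sup>2 = 1"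
  shows "\<exists>V. (circ_tractrix R c1 c2 has_vector_derivative V) (at t)
           \<and> norm V = tr_lambda R * \<bar>sin (tr_lambda R * t)\<bar> / \<bar>c1 / R + cos (tr_lambda R * t)\<bar>"
proof -
  define L where "L = tr_lambda R"
  define D where "D = c1 / R + cos (L * t)"
  define x1 where "x1 = (\<lambda>t. (R - 1/R) * cos (L * t) / (c1/R + cos (L * t)))"
  define x2 where "x2 = (\<lambda>t. - (L * sin (L * t)) / (c1/R + cos (L * t)))"
  define x3 where "x3 = (\<lambda>t. L * c2 / (c1/R + cos (L * t)))"
  have f: "circ_tractrix R c1 c2 = (\<lambda>t. vector [x1 t * cos (t / R) + x2 t * sin (t / R),
                - x2 t * cos (t / R) + x1 t * sin (t / R), x3 t])"
    unfolding circ_tractrix_def Let_def x1_def x2_def x3_def L_def ..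
  have "0 < sgn (c1 / R) * D"
    unfolding D_def by (rule sgn_mult_add_cos_pos[OF abs_div_gt_1_if_sq_diff_eq_1[OF R c]])
  then have D: "D \<noteq> 0" by auto
  then have "(x1 has_real_derivative - ((R - 1/R) * L * (c1/R) * sin (L * t)) / D\<^sup>2) (at t)"
    and "(x2 has_real_derivative - (L\<^sup>2 * (c1/R * cos (L * t) + 1)) / D\<^sup>2) (at t)"
    and "(x3 has_real_derivative L * c2 * L * sin (L * t) / D\<^sup>2) (at t)"
    unfolding x1_def x2_def x3_def D_def
    by (rule has_real_derivative_cos_div_add_cos has_real_derivative_sin_div_add_cos
        has_real_derivative_const_div_add_cos)+
  from rotating_curve_has_vector_derivative[OF this less_imp_neq[OF R(1), symmetric]]
  obtain V where V: "(circ_tractrix R c1 c2 has_vector_derivative V) (at t)"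
    and norm_V: "norm V = sqrt ((- ((R - 1/R) * L * (c1/R) * sin (L * t)) / D\<^sup>2
                   + (- (L * sin (L * t)) / D) / R)\<^sup>2
               + ((R - 1/R) * cos (L * t) / D / R - (- (L\<^sup>2 * (c1/R * cos (L * t) + 1)) / D\<^sup>2))\<^sup>2
               + (L * c2 * L * sin (L * t) / D\<^sup>2)\<^sup>2)"
    unfolding f x1_def x2_def D_def[symmetric] by blast
  have "c2\<^sup>2 = c1\<^sup>2 - 1" using c by simp
  from tractrix_speed_identity[OF R(1) D_def D sin_cos_squared_add this tr_lambda_squared[OF R, folded L_def]]
  have "norm V = sqrt ((L * sin (L * t) / D)\<^sup>2)"
    unfolding norm_V by simp
  also have "\<dots> = L * \<bar>sin (L * t)\<bar> / \<bar>D\<bar>"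
    using tr_lambda_pos[OF R] by (simp add: L_def abs_mult)
  finally show ?thesis
    using V unfolding L_def D_def by blast
qed

lemma abs_sin_eq_on_half_period:
  fixes n :: int
  assumes "0 < L" "t \<in> {of_int n * pi / L .. (of_int n + 1) * pi / L}"
  shows "\<bar>sin (L * t)\<bar> = cos (pi * of_int n) * sin (L * t)"
proof -
  define y where "y = L * t - pi * of_int n"
  have "0 \<le> y" "y \<le> pi"
    using assms by (auto simp: y_def field_simps)
  then have "0 \<le> sin y" by (rule sin_ge_zero)
  moreover have "sin (L * t) = cos (pi * of_int n) * sin y"
    unfolding y_def by (simp add: sin_diff algebra_simps)
  ultimately show ?thesis by (auto simp: abs_mult)
qed

lemma has_real_derivative_minus_ln_add_cos:
  assumes "0 < s * (a + cos (L * t))"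
  shows "((\<lambda>t. - ln (s * (a + cos (L * t)))) has_real_derivative
           L * sin (L * t) / (a + cos (L * t))) (at t)"
proof -
  have "a + cos (L * t) \<noteq> 0" "s \<noteq> 0" using assms by auto
  then show ?thesis
    using assms by (auto intro!: derivative_eq_intros simp: field_simps)
qed

lemma abs_sin_div_abs_add_cos_has_integral:
  fixes a L :: real and n :: int
  assumes a: "1 < \<bar>a\<bar>" and L: "0 < L"
  shows "((\<lambda>t. L * \<bar>sin (L * t)\<bar> / \<bar>a + cos (L * t)\<bar>) has_integral sgn a * ln ((a + 1) / (a - 1)))
           {of_int n * pi / L .. (of_int n + 1) * pi / L}"
proof -
  define lo where "lo = of_int n * pi / L"
  define hi where "hi = (of_int n + 1) * pi / L"
  define e where "e = cos (pi * of_int n)" \<comment> \<open>the sign of sin (L * t) on [lo, hi]\<close>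
  define \<Phi> where "\<Phi> = (\<lambda>t. sgn a * e * - ln (sgn a * (a + cos (L * t))))"
  have pos: "0 < sgn a * (a + cos x)" for x using sgn_mult_add_cos_pos[OF a] .
  have sgn_a: "sgn a = 1 \<or> sgn a = -1" and e: "e = 1 \<or> e = -1"
    using a by (auto simp: sgn_if e_def)
  have "lo \<le> hi" using L by (simp add: lo_def hi_def divide_right_mono)
  moreover have "(\<Phi> has_vector_derivative
      sgn a * e * (L * sin (L * t) / (a + cos (L * t)))) (at t within {lo..hi})" for t
    unfolding \<Phi>_def has_real_derivative_iff_has_vector_derivative[symmetric]
    by (rule has_field_derivative_at_within, rule DERIV_cmult)
      (rule has_real_derivative_minus_ln_add_cos[OF pos])
  ultimately have ftc: "((\<lambda>t. sgn a * e * (L * sin (L * t) / (a + cos (L * t))))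
      has_integral \<Phi> hi - \<Phi> lo) {lo..hi}"
    by (rule fundamental_theorem_of_calculus)
  have integrand: "L * \<bar>sin (L * t)\<bar> / \<bar>a + cos (L * t)\<bar> = sgn a * e * (L * sin (L * t) / (a + cos (L * t)))"
    if "t \<in> {lo..hi}" for t
  proof -
    have "\<bar>a + cos (L * t)\<bar> = sgn a * (a + cos (L * t))" "a + cos (L * t) \<noteq> 0"
      using pos[of "L * t"] sgn_a by auto
    then show ?thesis
      using abs_sin_eq_on_half_period[OF L that[unfolded lo_def hi_def]] sgn_a
      by (auto simp: e_def field_simps)
  qed
  have "L * lo = pi * of_int n" "L * hi = pi * of_int n + pi"
    using L by (simp_all add: lo_def hi_def field_simps)
  then have "cos (L * lo) = e" "cos (L * hi) = - e"
    by (simp_all add: e_def)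
  then have "\<Phi> hi - \<Phi> lo = sgn a * (ln (sgn a * (a + 1)) - ln (sgn a * (a - 1)))"
    using e by (auto simp: \<Phi>_def algebra_simps)
  also have "\<dots> = sgn a * ln ((a + 1) / (a - 1))"
    using ln_divide_pos[OF pos[of 0] pos[of pi]] sgn_a by auto
  finally show ?thesis
    using has_integral_cong[of "{lo..hi}", OF integrand] ftc by (simp add: lo_def hi_def)
qed

lemma sgn_mult_ln_ratio_pos:
  fixes a :: real
  assumes "1 < \<bar>a\<bar>"
  shows "0 < sgn a * ln ((a + 1) / (a - 1))"
proof (cases "0 < a")
  case True
  then show ?thesis using assms by simp
next
  case False
  then have "0 < (a + 1) / (a - 1)" "(a + 1) / (a - 1) < 1"
    using assms by (simp_all add: divide_less_eq zero_less_divide_iff)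
  then have "ln ((a + 1) / (a - 1)) < 0" by (rule ln_less_zero)
  moreover have "sgn a = -1" using False assms by simp
  ultimately show ?thesis by simp
qed

lemma circ_tractrix_differentiable:
  fixes R c1 c2 t :: real
  assumes "0 < R" "R < 1" "c1\<^sup>2 - c2\<^sup>2 = 1"
  shows "circ_tractrix R c1 c2 differentiable (at t)"
proof -
  obtain V where "(circ_tractrix R c1 c2 has_vector_derivative V) (at t)"
    using circ_tractrix_has_vector_derivative[OF assms] by blast
  then show ?thesis by (rule differentiableI_vector)
qed

lemma norm_vector_derivative_circ_tractrix:
  fixes R c1 c2 t :: real
  assumes "0 < R" "R < 1" "c1\<^sup>2 - c2\<^sup>2 = 1"
  shows "norm (vector_derivative (circ_tractrix R c1 c2) (at t))
           = tr_lambda R * \<bar>sin (tr_lambda R * t)\<bar> / \<bar>c1 / R + cos (tr_lambda R * t)\<bar>"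
proof -
  obtain V where "(circ_tractrix R c1 c2 has_vector_derivative V) (at t)"
    and "norm V = tr_lambda R * \<bar>sin (tr_lambda R * t)\<bar> / \<bar>c1 / R + cos (tr_lambda R * t)\<bar>"
    using circ_tractrix_has_vector_derivative[OF assms] by blast
  then show ?thesis by (simp add: vector_derivative_at)
qed

lemma vector_derivative_circ_tractrix_eq_0_iff:
  fixes R c1 c2 t :: real
  assumes R: "0 < R" "R < 1" and c: "c1\<^sup>2 - c2\<^sup>2 = 1"
  shows "vector_derivative (circ_tractrix R c1 c2) (at t) = 0
           \<longleftrightarrow> (\<exists>n::int. t = of_int n * pi / tr_lambda R)"
proof -
  define L where "L = tr_lambda R"
  have L: "0 < L" unfolding L_def using R by (rule tr_lambda_pos)
  have "0 < sgn (c1 / R) * (c1 / R + cos (L * t))"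
    by (rule sgn_mult_add_cos_pos[OF abs_div_gt_1_if_sq_diff_eq_1[OF R c]])
  then have D: "c1 / R + cos (L * t) \<noteq> 0" by auto
  have "vector_derivative (circ_tractrix R c1 c2) (at t) = 0
      \<longleftrightarrow> norm (vector_derivative (circ_tractrix R c1 c2) (at t)) = 0"
    by (rule norm_eq_zero[symmetric])
  also have "\<dots> \<longleftrightarrow> sin (L * t) = 0"
    using L D unfolding norm_vector_derivative_circ_tractrix[OF R c] L_def[symmetric] by simp
  also have "\<dots> \<longleftrightarrow> (\<exists>n::int. L * t = of_int n * pi)"
    by (rule sin_zero_iff_int2)
  also have "\<dots> \<longleftrightarrow> (\<exists>n::int. t = of_int n * pi / L)"
    using L by (auto simp: field_simps)
  finally show ?thesis unfolding L_def .
qed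

lemma sgn_mult_ln_div_ratio_eq:
  fixes c R :: real
  assumes "0 < R" "1 < \<bar>c / R\<bar>"
  shows "sgn (c / R) * ln ((c / R + 1) / (c / R - 1)) = sgn c * ln \<bar>(c + R) / (c - R)\<bar>"
proof -
  have "c \<noteq> R" using assms by auto
  then have "(c / R + 1) / (c / R - 1) = (c + R) / (c - R)"
    using assms(1) by (simp add: field_simps)
  moreover have "0 < (c / R + 1) / (c / R - 1)"
    using assms(2) by (auto simp: zero_less_divide_iff abs_if split: if_splits)
  ultimately have "(c / R + 1) / (c / R - 1) = \<bar>(c + R) / (c - R)\<bar>"
    by (metis abs_of_pos)
  moreover have "sgn (c / R) = sgn c" using assms(1) by simp
  ultimately show ?thesis by (simp only:)
qed

lemma circ_tractrix_arc_length:
  fixes R c1 c2 :: real and n :: int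
  assumes R: "0 < R" "R < 1" and c: "c1\<^sup>2 - c2\<^sup>2 = 1"
  shows "((\<lambda>t. norm (vector_derivative (circ_tractrix R c1 c2) (at t)))
           has_integral sgn c1 * ln \<bar>(c1 + R) / (c1 - R)\<bar>)
         {of_int n * pi / tr_lambda R .. (of_int n + 1) * pi / tr_lambda R}"
proof -
  have a: "1 < \<bar>c1 / R\<bar>" using abs_div_gt_1_if_sq_diff_eq_1[OF R c] .
  show ?thesis
    using abs_sin_div_abs_add_cos_has_integral[OF a tr_lambda_pos[OF R], of n]
    unfolding norm_vector_derivative_circ_tractrix[OF R c] sgn_mult_ln_div_ratio_eq[OF R(1) a] .
qed

lemma circ_tractrix_arc_length_pos:
  fixes R c1 c2 :: real
  assumes R: "0 < R" "R < 1" and c: "c1\<^sup>2 - c2\<^sup>2 = 1"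
  shows "0 < sgn c1 * ln \<bar>(c1 + R) / (c1 - R)\<bar>"
proof -
  have a: "1 < \<bar>c1 / R\<bar>" using abs_div_gt_1_if_sq_diff_eq_1[OF R c] .
  show ?thesis
    using sgn_mult_ln_ratio_pos[OF a] unfolding sgn_mult_ln_div_ratio_eq[OF R(1) a] .
qed

theorem mainTheorem12:
  fixes R c1 c2 :: real
  assumes "0 < R" and "R < 1" and "c1\<^sup>2 - c2\<^sup>2 = 1"
  shows "(\<forall>t. circ_tractrix R c1 c2 differentiable (at t))
    \<and> (\<forall>t. vector_derivative (circ_tractrix R c1 c2) (at t) = 0
            \<longleftrightarrow> (\<exists>n::int. t = of_int n * pi / tr_lambda R))
    \<and> (\<forall>n::int.
          (\<lambda>t. norm (vector_derivative (circ_tractrix R c1 c2) (at t)))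
             integrable_on {of_int n * pi / tr_lambda R .. (of_int n + 1) * pi / tr_lambda R}
        \<and> integral {of_int n * pi / tr_lambda R .. (of_int n + 1) * pi / tr_lambda R}
             (\<lambda>t. norm (vector_derivative (circ_tractrix R c1 c2) (at t)))
          = sgn c1 * ln \<bar>(c1 + R) / (c1 - R)\<bar>
        \<and> sgn c1 * ln \<bar>(c1 + R) / (c1 - R)\<bar> > 0)"
  using circ_tractrix_differentiable[OF assms] vector_derivative_circ_tractrix_eq_0_iff[OF assms]
    circ_tractrix_arc_length[OF assms] circ_tractrix_arc_length_pos[OF assms]
  by (auto simp: has_integral_integrable integral_unique)

end
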